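(* Let $X$ be a scalar random variable with samples $x$ and distribution $\pi$. Let $f:\mathbb{R}\to\mathbb{R}$ and let $Y = f(X)$, a scalar random variable with samples $y = f(x)$ and distribution $\pi_Y$, have an upper bound $u_b \in \mathbb{R}$ such that $\mathbb{P}_{\pi_Y}[Y \leq u_b] = 1$. Let $x_1,\dots,x_N$ be $N$ independent samples of $X$, set $y_k = f(x_k)$, and let $\zeta^*_N$ be the solution of $\min_{\zeta\in\mathbb{R}} \zeta$ subject to $\zeta \ge y_i$ for all $i = 1,\dots,N$ (i.e. $\zeta^*_N = \max_k f(x_k)$). Then for every $\epsilon\in[0,1]$, \[ \mathbb{P}^N_{\pi}\left[\mathbb{E}_{\pi}[f(X)] \leq \zeta^*_N(1-\epsilon) + u_b\epsilon\right] \geq 1-(1-\epsilon)^N. \]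
   Context: $\mathbb{P}^N_{\pi}$ denotes the $N$-fold product probability measure governing the i.i.d. sample $(x_1,\dots,x_N)$ drawn from $\pi$. *)

theory Defs
  imports "HOL-Probability.Probability"
begin

end

theory Submission
  imports Defs
begin

(* Choose the level t with t (1 - \<epsilon>) + u \<epsilon> = E f, where u is the upper bound of f.
   Integrating f \<le> u + (t - u) 1{f < t} shows that f falls below t with probability at most
   1 - \<epsilon> (a reverse Markov inequality). The guarantee fails only if all N independent samples
   fall below t, which has probability at most (1 - \<epsilon>)^N. *)

lemma (in prob_space) prob_less_le_of_expectation_ge:
  fixes f :: "'a \<Rightarrow> real"
  assumes f: "integrable M f" and bound: "AE x in M. f x \<le> u"
    and p: "0 < p" and mean: "t * p + u * (1 - p) \<le> expectation f"
  shows "prob {x \<in> space M. f x < t} \<le> p"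
proof (rule ccontr)
  define A where "A = {x \<in> space M. f x < t}"
  assume "\<not> prob {x \<in> space M. f x < t} \<le> p"
  then have pA: "p < prob A" by (simp add: A_def)
  have A: "A \<in> events"
    unfolding A_def using borel_measurable_integrable[OF f] by measurable
  have "expectation f \<le> expectation (\<lambda>_. u)"
    using f bound by (intro integral_mono_AE) auto
  then have "p * t \<le> p * u"
    using mean by (simp add: prob_space algebra_simps)
  then have "t \<le> u"
    using p by simp
  define g where "g x = u + (t - u) * indicator A x" for x
  have g: "integrable M g"
    unfolding g_def using A by (simp add: emeasure_eq_measure)
  have "expectation f < expectation g"
  proof (rule integral_less_AE[where A = A])
    show "emeasure M A \<noteq> 0"
      using pA p by (simp add: emeasure_eq_measure)
    show "AE x in M. x \<in> A \<longrightarrow> f x \<noteq> g x"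
      by (auto simp: A_def g_def)
    show "AE x in M. f x \<le> g x"
      using bound by eventually_elim (auto simp: A_def g_def indicator_def)
  qed (use f g A in auto)
  also have "expectation g = u + (t - u) * prob A"
    unfolding g_def using A by (simp add: emeasure_eq_measure prob_space)
  also have "\<dots> \<le> u + (t - u) * p"
    using \<open>t \<le> u\<close> pA by (intro add_left_mono mult_left_mono_neg) auto
  also have "\<dots> = t * p + u * (1 - p)"
    by (simp add: algebra_simps)
  finally show False
    using mean by simp
qed

lemma (in prob_space) measure_PiM_le_Max:
  fixes f :: "'a \<Rightarrow> real"
  assumes f: "f \<in> borel_measurable M" and I: "finite I" "I \<noteq> {}"
  shows "measure (\<Pi>\<^sub>M i\<in>I. M) {xs \<in> space (\<Pi>\<^sub>M i\<in>I. M). t \<le> Max ((\<lambda>i. f (xs i)) ` I)}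
           = 1 - prob {x \<in> space M. f x < t} ^ card I"
proof -
  interpret P: finite_product_prob_space "\<lambda>_. M" I
    using I by unfold_locales
  define A where "A = {x \<in> space M. f x < t}"
  have A: "A \<in> events"
    unfolding A_def using f by measurable
  have "{xs \<in> space (\<Pi>\<^sub>M i\<in>I. M). t \<le> Max ((\<lambda>i. f (xs i)) ` I)}
          = space (\<Pi>\<^sub>M i\<in>I. M) - (\<Pi>\<^sub>E i\<in>I. A)"
    using I by (auto simp: A_def space_PiM PiE_iff Max_ge_iff not_less extensional_def)
      (meson not_less)
  moreover have "measure (\<Pi>\<^sub>M i\<in>I. M) (\<Pi>\<^sub>E i\<in>I. A) = prob A ^ card I"
    using A by (simp add: P.finite_measure_PiM_emb)
  ultimately show ?thesis
    using P.prob_compl[of "\<Pi>\<^sub>E i\<in>I. A"] A I by (simp add: A_def sets_PiM_I_finite)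
qed

theorem corollary1:
  fixes \<pi> :: "real measure" and f :: "real \<Rightarrow> real" and u\<^sub>b :: real
    and N :: nat and \<epsilon> :: real
  assumes "prob_space \<pi>"
    and "sets \<pi> = sets borel"
    and "f \<in> borel_measurable \<pi>"
    and "integrable \<pi> f"
    and "AE x in \<pi>. f x \<le> u\<^sub>b"
    and "0 \<le> \<epsilon>" and "\<epsilon> \<le> 1"
  shows "measure (\<Pi>\<^sub>M i\<in>{..<N}. \<pi>)
           {xs \<in> space (\<Pi>\<^sub>M i\<in>{..<N}. \<pi>).
              (\<integral>x. f x \<partial>\<pi>) \<le> Max ((\<lambda>k. f (xs k)) ` {..<N}) * (1 - \<epsilon>) + u\<^sub>b * \<epsilon>}
         \<ge> 1 - (1 - \<epsilon>) ^ N"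
proof -
  interpret prob_space \<pi> by fact
  let ?P = "\<Pi>\<^sub>M i\<in>{..<N}. \<pi>"
  let ?max = "\<lambda>xs. Max ((\<lambda>k. f (xs k)) ` {..<N})"
  consider "\<epsilon> = 1" | "N = 0" | "\<epsilon> < 1" "N > 0"
    using assms(7) by fastforce
  then show ?thesis
  proof cases
    case 1
    have "expectation f \<le> expectation (\<lambda>_. u\<^sub>b)"
      using assms(4,5) by (intro integral_mono_AE) auto
    moreover have "measure ?P (space ?P) = 1"
      by (rule prob_space.prob_space, rule prob_space_PiM, rule assms(1))
    ultimately show ?thesis
      using 1 by (cases N) (simp_all add: prob_space)
  next
    case 2
    then show ?thesis by simp
  next
    case 3
    define t where "t = (expectation f - u\<^sub>b * \<epsilon>) / (1 - \<epsilon>)"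
    have level: "t * (1 - \<epsilon>) + u\<^sub>b * \<epsilon> = expectation f"
      using 3 by (simp add: t_def field_simps)
    have "expectation f \<le> m * (1 - \<epsilon>) + u\<^sub>b * \<epsilon> \<longleftrightarrow> t * (1 - \<epsilon>) \<le> m * (1 - \<epsilon>)" for m
      using level by linarith
    then have event: "{xs \<in> space ?P. expectation f \<le> ?max xs * (1 - \<epsilon>) + u\<^sub>b * \<epsilon>}
                 = {xs \<in> space ?P. t \<le> ?max xs}"
      using 3 by simp
    have "prob {x \<in> space \<pi>. f x < t} \<le> 1 - \<epsilon>"
      using 3 level by (intro prob_less_le_of_expectation_ge[OF assms(4,5)]) auto
    then have "prob {x \<in> space \<pi>. f x < t} ^ N \<le> (1 - \<epsilon>) ^ N"
      by (simp add: power_mono)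
    moreover have "measure ?P {xs \<in> space ?P. t \<le> ?max xs} = 1 - prob {x \<in> space \<pi>. f x < t} ^ N"
      using 3 by (subst measure_PiM_le_Max[OF assms(3)]) auto
    ultimately show ?thesis
      unfolding event by linarith
  qed
qed

end
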